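(* There is an absolute constant $C$ such that the following holds: if $\Gamma$ is the incidence graph of a $(v,k,\lambda)$ symmetric design of order $q=k-\lambda\geq 2$, and $n=2v$ is the number of vertices of $\Gamma$, then $\mu(\Gamma)\leq C\sqrt{n}\log n$; that is, $\mu(\Gamma)=O(\sqrt{n}\log n)$.
   Context: A symmetric design with parameters $(v,k,\lambda)$ is a pair $(X,\mathcal{B})$ where $X$ is a set of $v$ points and $\mathcal{B}$ is a family of $k$-subsets of $X$ (blocks) such that any two distinct points lie in exactly $\lambda$ blocks and any two distinct blocks meet in exactly $\lambda$ points. Its order is $q=k-\lambda$. Its incidence graph is the bipartite graph on $X\cup\mathcal{B}$ with $x$ adjacent to $B$ iff $x\in B$. A resolving set of a connected graph is a set $S$ of vertices such that for any two distinct vertices $u,w$ some $s\in S$ has $d(u,s)\neq d(w,s)$; the metric dimension $\mu(\Gamma)$ is the minimum size of a resolving set. *)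

theory Defs
  imports Complex_Main
begin

definition symmetric_design :: "'p set \<Rightarrow> 'p set set \<Rightarrow> nat \<Rightarrow> nat \<Rightarrow> nat \<Rightarrow> bool" where
  "symmetric_design X B v k lam \<longleftrightarrow>
     finite X \<and> card X = v \<and> card B = v \<and>
     (\<forall>b\<in>B. b \<subseteq> X \<and> card b = k) \<and>
     (\<forall>x\<in>X. \<forall>y\<in>X. x \<noteq> y \<longrightarrow> card {b\<in>B. x \<in> b \<and> y \<in> b} = lam) \<and>
     (\<forall>b\<in>B. \<forall>c\<in>B. b \<noteq> c \<longrightarrow> card (b \<inter> c) = lam)"

definition inc_vertices :: "'p set \<Rightarrow> 'p set set \<Rightarrow> ('p + 'p set) set" where
  "inc_vertices X B = Inl ` X \<union> Inr ` B"

fun inc_adj :: "'p set \<Rightarrow> 'p set set \<Rightarrow> ('p + 'p set) \<Rightarrow> ('p + 'p set) \<Rightarrow> bool" where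
  "inc_adj X B (Inl x) (Inr b) \<longleftrightarrow> x \<in> X \<and> b \<in> B \<and> x \<in> b"
| "inc_adj X B (Inr b) (Inl x) \<longleftrightarrow> x \<in> X \<and> b \<in> B \<and> x \<in> b"
| "inc_adj X B _ _ \<longleftrightarrow> False"

definition is_walk :: "('a \<Rightarrow> 'a \<Rightarrow> bool) \<Rightarrow> 'a list \<Rightarrow> 'a \<Rightarrow> 'a \<Rightarrow> bool" where
  "is_walk E p u w \<longleftrightarrow> p \<noteq> [] \<and> hd p = u \<and> last p = w \<and>
     (\<forall>i. Suc i < length p \<longrightarrow> E (p ! i) (p ! Suc i))"

text \<open>Graph distance: least number of edges of a walk (used only on connected graphs).\<close>
definition graph_dist :: "('a \<Rightarrow> 'a \<Rightarrow> bool) \<Rightarrow> 'a \<Rightarrow> 'a \<Rightarrow> nat" where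
  "graph_dist E u w = (LEAST n. \<exists>p. is_walk E p u w \<and> length p = Suc n)"

definition resolving_set :: "'a set \<Rightarrow> ('a \<Rightarrow> 'a \<Rightarrow> bool) \<Rightarrow> 'a set \<Rightarrow> bool" where
  "resolving_set V E S \<longleftrightarrow> S \<subseteq> V \<and>
     (\<forall>u\<in>V. \<forall>w\<in>V. u \<noteq> w \<longrightarrow> (\<exists>s\<in>S. graph_dist E u s \<noteq> graph_dist E w s))"

definition metric_dimension :: "'a set \<Rightarrow> ('a \<Rightarrow> 'a \<Rightarrow> bool) \<Rightarrow> nat" where
  "metric_dimension V E = (LEAST m. \<exists>S. resolving_set V E S \<and> finite S \<and> card S = m)"

end

(*
  The incidence graph is bipartite and, as any two points lie on a common block, connected.
  A point and a block are therefore told apart by the parity of their distances to any fixed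
  point; two points by a block containing exactly one of them, and two blocks by a point of
  their symmetric difference, since distance 1 means incidence.  So a resolving set is formed
  by a set P of points meeting the symmetric difference of any two blocks together with a set
  Q of blocks meeting, for any two points, the blocks separating them.  All these sets have
  exactly 2 (k - lam) elements, and the greedy hitting-set bound gives
  |P|, |Q| <= v / (k - lam) * ln v + 1.  Finally the identity lam (v - 1) = k (k - 1), applied
  to the design and to its complement, forces v <= 4 (k - lam)^2, so v / (k - lam) <= 2 sqrt v.
*)

theory Submission
  imports Defs
begin

section \<open>Greedy hitting sets\<close>

lemma exists_element_in_many_sets:
  assumes U: "finite U" and I: "finite I" "I \<noteq> {}" and m: "0 < m"
    and large: "\<And>i. i \<in> I \<Longrightarrow> A i \<subseteq> U \<and> m \<le> card (A i)"
  shows "\<exists>e\<in>U. m * card I \<le> card U * card {i\<in>I. e \<in> A i}"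
proof (rule ccontr)
  assume "\<not> ?thesis"
  moreover have "U \<noteq> {}"
    using I(2) large m by fastforce
  ultimately have "(\<Sum>e\<in>U. card U * card {i\<in>I. e \<in> A i}) < (\<Sum>e\<in>U. m * card I)"
    using U by (intro sum_strict_mono) auto
  also have "\<dots> = card U * (m * card I)" by simp
  finally have "(\<Sum>e\<in>U. card {i\<in>I. e \<in> A i}) < m * card I"
    by (simp add: sum_distrib_left[symmetric])
  moreover have "(\<Sum>e\<in>U. card {i\<in>I. e \<in> A i}) = (\<Sum>i\<in>I. card {e\<in>U. e \<in> A i})"
    using U I(1) by (rule sum_multicount_gen) simp
  moreover have "card {e\<in>U. e \<in> A i} = card (A i)" if "i \<in> I" for i
  proof -
    have "{e\<in>U. e \<in> A i} = A i" using large[OF that] by blast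
    then show ?thesis by simp
  qed
  ultimately have "(\<Sum>i\<in>I. card (A i)) < m * card I" by simp
  moreover have "m * card I \<le> (\<Sum>i\<in>I. card (A i))"
    using sum_bounded_below[of I m "\<lambda>i. card (A i)"] large by (simp add: mult.commute)
  ultimately show False by simp
qed

(* Removing at least a fraction m / N of the c remaining sets lowers (N / m) ln c by at least 1. *)
lemma ln_greedy_step:
  fixes N m c g :: real
  assumes "0 < m" "0 < N" "0 \<le> g" "g < c" "m * c \<le> N * g"
  shows "N / m * ln (c - g) + 1 \<le> N / m * ln c"
proof -
  have "ln (c - g) - ln c = ln ((c - g) / c)"
    using assms by (simp add: ln_div)
  also have "\<dots> \<le> (c - g) / c - 1"
    using assms by (intro ln_le_minus_one) simp
  also have "\<dots> = - (g / c)"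
    using assms by (simp add: field_simps)
  also have "\<dots> \<le> - (m / N)"
    using assms by (simp add: field_simps)
  finally have "N / m * ln (c - g) \<le> N / m * (ln c - m / N)"
    using assms by (intro mult_left_mono) auto
  also have "\<dots> = N / m * ln c - 1"
    using assms by (simp add: right_diff_distrib)
  finally show ?thesis
    by simp
qed

lemma greedy_hitting_set_step:
  assumes U: "finite U" and m: "0 < m" and I: "finite I" and e: "e \<in> U"
    and many: "m * card I \<le> card U * card {i\<in>I. e \<in> A i}"
    and rest: "{i\<in>I. e \<notin> A i} \<noteq> {}"
    and H': "finite H'"
      "real (card H') \<le> real (card U) / real m * ln (real (card {i\<in>I. e \<notin> A i})) + 1"
  shows "real (card (insert e H')) \<le> real (card U) / real m * ln (real (card I)) + 1"
proof -
  define g where "g = card {i\<in>I. e \<in> A i}"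
  have "card {i\<in>I. e \<notin> A i} = card I - g"
    unfolding g_def using I
    by (subst card_Diff_subset[symmetric]) (auto intro: arg_cong[where f=card])
  moreover have "0 < card {i\<in>I. e \<notin> A i}"
    using rest I by (simp add: card_gt_0_iff)
  ultimately have "real (card {i\<in>I. e \<notin> A i}) = real (card I) - real g" "real g < real (card I)"
    by auto
  moreover have "real m * real (card I) \<le> real (card U) * real g"
    using many unfolding g_def by (simp flip: of_nat_mult)
  moreover have "0 < card U"
    using U e by (auto simp: card_gt_0_iff)
  ultimately have "real (card H') + 1 \<le> real (card U) / real m * ln (real (card I)) + 1"
    using H'(2) ln_greedy_step[of "real m" "real (card U)" "real g" "real (card I)"] m by simp
  then show ?thesis
    using H'(1) by (simp add: card_insert_if)
qed

theorem greedy_hitting_set: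
  assumes U: "finite U" and m: "0 < m" and "finite I"
    and "\<And>i. i \<in> I \<Longrightarrow> A i \<subseteq> U \<and> m \<le> card (A i)"
  shows "\<exists>H\<subseteq>U. (\<forall>i\<in>I. A i \<inter> H \<noteq> {}) \<and>
    real (card H) \<le> real (card U) / real m * ln (real (card I)) + 1"
  using assms(3,4)
proof (induction "card I" arbitrary: I rule: less_induct)
  case less
  show ?case
  proof (cases "I = {}")
    case True
    then show ?thesis
      by (intro exI[of _ "{}"]) simp
  next
    case False
    have "\<exists>e\<in>U. m * card I \<le> card U * card {i\<in>I. e \<in> A i}"
      using less.prems by (intro exists_element_in_many_sets[OF U _ False m]) auto
    then obtain e where e: "e \<in> U" and many: "m * card I \<le> card U * card {i\<in>I. e \<in> A i}"
      by blast
    define I' where "I' = {i\<in>I. e \<notin> A i}"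
    show ?thesis
    proof (cases "I' = {}")
      case True
      have "0 \<le> ln (real (card I))"
        using False less.prems(1) by (simp add: Suc_le_eq card_gt_0_iff)
      with True e show ?thesis
        by (intro exI[of _ "{e}"]) (auto simp: I'_def)
    next
      case False
      have "0 < m * card I"
        using m \<open>I \<noteq> {}\<close> less.prems(1) by (simp add: card_gt_0_iff)
      with many have "{i\<in>I. e \<in> A i} \<noteq> {}"
        by (metis card.empty mult_0_right not_le)
      then have "I' \<subset> I"
        unfolding I'_def by blast
      then have "card I' < card I"
        using less.prems(1) by (rule psubset_card_mono[rotated])
      moreover have "finite I'"
        using less.prems(1) unfolding I'_def by simp
      moreover have "A i \<subseteq> U \<and> m \<le> card (A i)" if "i \<in> I'" for i
        using that less.prems(2) unfolding I'_def by simp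
      ultimately obtain H' where H': "H' \<subseteq> U" "\<forall>i\<in>I'. A i \<inter> H' \<noteq> {}"
          "real (card H') \<le> real (card U) / real m * ln (real (card I')) + 1"
        by (metis less.hyps)
      moreover have "\<forall>i\<in>I. A i \<inter> insert e H' \<noteq> {}"
        using H'(2) unfolding I'_def by blast
      moreover have "real (card (insert e H')) \<le> real (card U) / real m * ln (real (card I)) + 1"
        using greedy_hitting_set_step[OF U m less.prems(1) e many] False H'
          finite_subset[OF H'(1) U]
        unfolding I'_def by blast
      ultimately show ?thesis
        using e by (intro exI[of _ "insert e H'"]) auto
    qed
  qed
qed

lemma ln_le_two_ln_of_le_square:
  fixes a n :: nat
  assumes "a \<le> n * n"
  shows "ln (real a) \<le> 2 * ln (real n)"
proof (cases "a = 0")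
  case True
  then show ?thesis
    by (cases "n = 0") auto
next
  case False
  with assms have "0 < n"
    by (cases n) auto
  have "real a \<le> real n * real n"
    using assms by (metis of_nat_le_iff of_nat_mult)
  then have "ln (real a) \<le> ln (real n * real n)"
    using False by (subst ln_le_cancel_iff) auto
  also have "\<dots> = 2 * ln (real n)"
    using \<open>0 < n\<close> by (simp add: ln_mult)
  finally show ?thesis .
qed

lemma greedy_hitting_set_pairs:
  assumes U: "finite U" "card U = n" and T: "finite T" "card T = n" and m: "0 < m"
    and large: "\<And>a b. a \<in> T \<Longrightarrow> b \<in> T \<Longrightarrow> a \<noteq> b \<Longrightarrow> A a b \<subseteq> U \<and> m \<le> card (A a b)"
  shows "\<exists>H\<subseteq>U. (\<forall>a\<in>T. \<forall>b\<in>T. a \<noteq> b \<longrightarrow> A a b \<inter> H \<noteq> {}) \<and>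
    real (card H) \<le> real n / real m * (2 * ln (real n)) + 1"
proof -
  define I where "I = {p \<in> T \<times> T. fst p \<noteq> snd p}"
  have "I \<subseteq> T \<times> T" "finite (T \<times> T)"
    using T(1) unfolding I_def by auto
  then have "finite I" "card I \<le> n * n"
    using finite_subset card_mono T(2) by (metis, metis card_cartesian_product)
  have large_I: "A (fst p) (snd p) \<subseteq> U \<and> m \<le> card (A (fst p) (snd p))" if "p \<in> I" for p
    using that unfolding I_def by (intro large) auto
  obtain H where H: "H \<subseteq> U" "\<forall>p\<in>I. A (fst p) (snd p) \<inter> H \<noteq> {}"
      "real (card H) \<le> real (card U) / real m * ln (real (card I)) + 1"
    using greedy_hitting_set[where A = "\<lambda>p. A (fst p) (snd p)", OF U(1) m \<open>finite I\<close> large_I]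
    by blast
  have "real n / real m * ln (real (card I)) \<le> real n / real m * (2 * ln (real n))"
    using ln_le_two_ln_of_le_square[OF \<open>card I \<le> n * n\<close>] by (rule mult_left_mono) simp
  moreover have "\<forall>a\<in>T. \<forall>b\<in>T. a \<noteq> b \<longrightarrow> A a b \<inter> H \<noteq> {}"
  proof (intro ballI impI)
    fix a b assume "a \<in> T" "b \<in> T" "a \<noteq> b"
    then have "(a, b) \<in> I"
      unfolding I_def by simp
    with H(2) show "A a b \<inter> H \<noteq> {}"
      by (metis fst_conv snd_conv)
  qed
  ultimately show ?thesis
    using H(1,3) U(2) by (intro exI[of _ H]) auto
qed

section \<open>Graph distance and resolving sets\<close>

lemma is_walk_length_iff_relpowp:
  "(\<exists>p. is_walk E p u w \<and> length p = Suc n) \<longleftrightarrow> (E ^^ n) u w"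
proof
  assume "\<exists>p. is_walk E p u w \<and> length p = Suc n"
  then obtain p where p: "is_walk E p u w" "length p = Suc n" by blast
  have "p ! 0 = u" "p ! n = w" "\<forall>i<n. E (p ! i) (p ! Suc i)"
    using p by (auto simp: is_walk_def hd_conv_nth last_conv_nth)
  then show "(E ^^ n) u w"
    unfolding relpowp_fun_conv by blast
next
  assume "(E ^^ n) u w"
  then obtain f where f: "f 0 = u" "f n = w" "\<forall>i<n. E (f i) (f (Suc i))"
    unfolding relpowp_fun_conv by blast
  have "is_walk E (map f [0..<Suc n]) u w"
    using f by (auto simp: is_walk_def hd_map last_map nth_append simp del: upt_Suc)
  then show "\<exists>p. is_walk E p u w \<and> length p = Suc n" by force
qed

lemma graph_dist_eq_Least: "graph_dist E u w = (LEAST n. (E ^^ n) u w)"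
  unfolding graph_dist_def is_walk_length_iff_relpowp ..

lemma relpowp_graph_dist:
  assumes "E\<^sup>*\<^sup>* u w"
  shows "(E ^^ graph_dist E u w) u w"
  using assms unfolding graph_dist_eq_Least rtranclp_power by (rule LeastI_ex)

lemma graph_dist_le: "(E ^^ n) u w \<Longrightarrow> graph_dist E u w \<le> n"
  unfolding graph_dist_eq_Least by (rule Least_le)

lemma graph_dist_eq_0_iff:
  assumes "E\<^sup>*\<^sup>* u w"
  shows "graph_dist E u w = 0 \<longleftrightarrow> u = w"
  using relpowp_graph_dist[OF assms] graph_dist_le[where n=0 and w=u] by auto

lemma graph_dist_eq_1_iff:
  assumes "E\<^sup>*\<^sup>* u w"
  shows "graph_dist E u w = 1 \<longleftrightarrow> u \<noteq> w \<and> E u w"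
proof
  assume "graph_dist E u w = 1"
  then show "u \<noteq> w \<and> E u w"
    using relpowp_graph_dist[OF assms] graph_dist_eq_0_iff[OF assms] by auto
next
  assume "u \<noteq> w \<and> E u w"
  then show "graph_dist E u w = 1"
    using graph_dist_le[of 1 E u w, unfolded relpowp_1] graph_dist_eq_0_iff[OF assms] by fastforce
qed

lemma resolving_setI:
  assumes "S \<subseteq> V" and connected: "\<And>u w. u \<in> V \<Longrightarrow> w \<in> V \<Longrightarrow> E\<^sup>*\<^sup>* u w"
    and outside: "\<And>u w. u \<in> V - S \<Longrightarrow> w \<in> V - S \<Longrightarrow> u \<noteq> w \<Longrightarrow>
      \<exists>s\<in>S. graph_dist E u s \<noteq> graph_dist E w s"
  shows "resolving_set V E S"
  unfolding resolving_set_def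
proof (intro conjI ballI impI)
  fix u w assume uw: "u \<in> V" "w \<in> V" "u \<noteq> w"
  have "graph_dist E u s \<noteq> graph_dist E w s" if "s \<in> {u, w}" for s
    using that uw graph_dist_eq_0_iff[OF connected] by (metis insert_iff singletonD)
  with outside[of u w] uw show "\<exists>s\<in>S. graph_dist E u s \<noteq> graph_dist E w s"
    by blast
qed (fact assms)

lemma metric_dimension_le:
  "resolving_set V E S \<Longrightarrow> finite S \<Longrightarrow> metric_dimension V E \<le> card S"
  unfolding metric_dimension_def by (rule Least_le) blast

lemma metric_dimension_empty: "metric_dimension {} E = 0"
  using metric_dimension_le[of "{}" E "{}"] by (simp add: resolving_set_def)

section \<open>Counting in symmetric designs\<close>

lemma symmetric_design_finite_blocks:
  assumes "symmetric_design X B v k lam"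
  shows "finite B"
proof (rule finite_subset)
  show "B \<subseteq> Pow X" "finite (Pow X)"
    using assms unfolding symmetric_design_def by auto
qed

lemma card_blocks_through_point_mult_eq:
  assumes D: "symmetric_design X B v k lam" and x: "x \<in> X"
  shows "card {b\<in>B. x \<in> b} * (k - 1) = lam * (v - 1)"
proof -
  have fin: "finite X" "finite B" "card X = v"
    using D symmetric_design_finite_blocks[OF D] unfolding symmetric_design_def by auto
  have "(\<Sum>b\<in>{b\<in>B. x \<in> b}. card {z\<in>X - {x}. z \<in> b}) = lam * card (X - {x})"
    using D fin x unfolding symmetric_design_def by (intro sum_multicount) auto
  moreover have "card {z\<in>X - {x}. z \<in> b} = k - 1" if "b \<in> B" "x \<in> b" for b
  proof -
    have "{z\<in>X - {x}. z \<in> b} = b - {x}" "finite b" "card b = k"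
      using D fin that unfolding symmetric_design_def by (auto intro: finite_subset)
    then show ?thesis using that by simp
  qed
  ultimately show ?thesis
    using fin x by simp
qed

lemma card_blocks_through_point:
  assumes D: "symmetric_design X B v k lam" and k: "2 \<le> k" and x: "x \<in> X"
  shows "card {b\<in>B. x \<in> b} = k"
proof -
  have fin: "finite X" "finite B" "card X = v" "card B = v"
    using D symmetric_design_finite_blocks[OF D] unfolding symmetric_design_def by auto
  define r where "r = card {b\<in>B. x \<in> b}"
  have r: "card {b\<in>B. y \<in> b} = r" if "y \<in> X" for y
  proof -
    have "card {b\<in>B. y \<in> b} * (k - 1) = r * (k - 1)"
      using card_blocks_through_point_mult_eq[OF D that] card_blocks_through_point_mult_eq[OF D x]
      unfolding r_def by simp
    moreover have "k - 1 \<noteq> 0"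
      using k by simp
    ultimately show ?thesis
      by simp
  qed
  have "v * r = (\<Sum>y\<in>X. card {b\<in>B. y \<in> b})"
    using fin r by simp
  also have "\<dots> = k * card B"
    using D fin unfolding symmetric_design_def
    by (intro sum_multicount) (auto simp: Int_absorb1 Collect_conj_eq)
  finally have "v * r = v * k"
    using fin by (simp add: mult.commute)
  moreover have "0 < v"
    using fin x by (auto simp: card_gt_0_iff)
  ultimately show ?thesis
    unfolding r_def by simp
qed

lemma symmetric_design_param_eq:
  assumes "symmetric_design X B v k lam" "2 \<le> k" "x \<in> X"
  shows "lam * (v - 1) = k * (k - 1)"
  using card_blocks_through_point_mult_eq[OF assms(1,3)] card_blocks_through_point[OF assms] by simp

lemma card_sym_diff:
  assumes "finite A" "finite C" "card A = n" "card C = n" "card (A \<inter> C) = l"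
  shows "card (sym_diff A C) = 2 * (n - l)"
proof -
  have "card (A - C) = n - l" "card (C - A) = n - l"
    using assms by (simp_all add: card_Diff_subset_Int Int_commute)
  moreover have "card (sym_diff A C) = card (A - C) + card (C - A)"
    using assms by (intro card_Un_disjoint) auto
  ultimately show ?thesis by simp
qed

lemma card_block_sym_diff:
  assumes D: "symmetric_design X B v k lam" and "b \<in> B" "c \<in> B" "b \<noteq> c"
  shows "card (sym_diff b c) = 2 * (k - lam)"
proof (rule card_sym_diff)
  show "finite b" "finite c" "card b = k" "card c = k"
    using assms(1-3) unfolding symmetric_design_def by (auto intro: finite_subset)
  show "card (b \<inter> c) = lam"
    using assms unfolding symmetric_design_def by blast
qed

lemma card_separating_blocks:
  assumes D: "symmetric_design X B v k lam" and k: "2 \<le> k" and "x \<in> X" "y \<in> X" "x \<noteq> y"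
  shows "card {b\<in>B. (x \<in> b) \<noteq> (y \<in> b)} = 2 * (k - lam)"
proof -
  have "{b\<in>B. (x \<in> b) \<noteq> (y \<in> b)} = sym_diff {b\<in>B. x \<in> b} {b\<in>B. y \<in> b}"
    by auto
  moreover have "{b\<in>B. x \<in> b} \<inter> {b\<in>B. y \<in> b} = {b\<in>B. x \<in> b \<and> y \<in> b}"
    by auto
  moreover have "card {b\<in>B. x \<in> b \<and> y \<in> b} = lam"
    using D assms unfolding symmetric_design_def by blast
  ultimately show ?thesis
    using symmetric_design_finite_blocks[OF D] card_blocks_through_point[OF D k] assms
    by (simp add: card_sym_diff)
qed

(* V - K and V - 2 K + L are the block size and the lambda of the complementary design. *)
lemma complementary_block_size_bound:
  fixes L K V :: int
  assumes "1 \<le> L" "L + 2 \<le> K" "K \<le> V" and param: "L * (V - 1) = K * (K - 1)"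
  shows "V - 1 \<le> (V - K) * (V - K - 1)"
proof -
  define Q s where "Q = K - L" and "s = V - K"
  have ss: "s * (s - 1) = (s - Q) * (V - 1)"
    using param unfolding Q_def s_def by (simp add: algebra_simps)
  have V: "3 \<le> V" "0 \<le> s" "2 \<le> Q"
    using assms unfolding Q_def s_def by auto
  have "1 \<le> s - Q"
  proof (rule ccontr)
    assume "\<not> 1 \<le> s - Q"
    then have "s * (s - 1) \<le> 0"
      using ss V by (simp add: mult_nonpos_nonneg)
    moreover have "0 \<le> s * (s - 1)"
      using V by (cases "s = 0") auto
    ultimately have "s = 0 \<or> s = 1"
      by simp
    then show False
      using ss V by auto
  qed
  then show ?thesis
    using ss V unfolding s_def by simp
qed

(* Both K and s = V - K satisfy x (x - 1) >= V - 1, while K s = Q (V - 1) and K + s = V;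
   hence min K s < 2 Q. *)
lemma param_identity_imp_le_four_order_sq:
  fixes L K V :: int
  assumes L: "1 \<le> L" and KL: "L + 2 \<le> K" and KV: "K \<le> V" and param: "L * (V - 1) = K * (K - 1)"
  shows "V \<le> 4 * (K - L)^2"
proof -
  define Q s where "Q = K - L" and "s = V - K"
  have Ks: "K * s = Q * (V - 1)"
    using param unfolding Q_def s_def by (simp add: algebra_simps)
  have V: "3 \<le> V" "0 \<le> s" "2 \<le> Q" "2 \<le> K"
    using L KL KV unfolding Q_def s_def by auto
  have s_large: "V - 1 \<le> s * (s - 1)"
    using complementary_block_size_bound[OF assms] unfolding s_def .
  have "1 * (V - 1) \<le> L * (V - 1)"
    using L V by (intro mult_right_mono) auto
  then have K_large: "V - 1 \<le> K * (K - 1)"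
    using param by simp
  have "s \<noteq> 0"
    using s_large V by auto
  define t where "t = min K s"
  have t_pos: "1 \<le> t" and t_large: "V - 1 \<le> t * (t - 1)"
    using V \<open>s \<noteq> 0\<close> s_large K_large unfolding t_def min_def by auto
  have "t * V \<le> t * (2 * max K s)"
    using V unfolding t_def s_def by (intro mult_left_mono) (auto simp: max_def)
  also have "\<dots> = 2 * Q * (V - 1)"
    using Ks unfolding t_def by (simp add: min_def max_def algebra_simps)
  finally have tV: "t * V \<le> 2 * Q * (V - 1)" .
  have "t \<le> 2 * Q - 1"
  proof (rule ccontr)
    assume "\<not> t \<le> 2 * Q - 1"
    then have "2 * Q * V \<le> t * V"
      using V by (intro mult_right_mono) auto
    moreover have "2 * Q * (V - 1) = 2 * Q * V - 2 * Q"
      by (simp add: algebra_simps)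
    ultimately show False
      using tV V by linarith
  qed
  then have "t * (t - 1) \<le> (2 * Q - 1) * (2 * Q - 2)"
    using t_pos by (intro mult_mono) auto
  moreover have "(2 * Q - 1) * (2 * Q - 2) = 4 * Q^2 - 6 * Q + 2"
    by (simp add: algebra_simps power2_eq_square)
  ultimately have "V \<le> 4 * Q^2"
    using t_large V by linarith
  then show ?thesis
    unfolding Q_def .
qed

lemma symmetric_design_lambda_pos:
  assumes D: "symmetric_design X B v k lam" and "2 \<le> k" "X \<noteq> {}"
  shows "1 \<le> lam"
proof -
  obtain x where "x \<in> X" using \<open>X \<noteq> {}\<close> by blast
  then have "lam * (v - 1) = k * (k - 1)"
    using symmetric_design_param_eq[OF D \<open>2 \<le> k\<close>] by blast
  moreover have "0 < k * (k - 1)"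
    using \<open>2 \<le> k\<close> by simp
  ultimately show ?thesis
    by (metis less_one mult_is_0 not_le not_less_zero)
qed

lemma symmetric_design_card_le_order_sq:
  assumes D: "symmetric_design X B v k lam" and kl: "lam + 2 \<le> k" and "X \<noteq> {}"
  shows "3 \<le> v" "v \<le> 4 * (k - lam)^2"
proof -
  obtain x where x: "x \<in> X"
    using \<open>X \<noteq> {}\<close> by blast
  have lam: "1 \<le> lam"
    using symmetric_design_lambda_pos[OF D _ \<open>X \<noteq> {}\<close>] kl by simp
  have X: "finite X" "card X = v" "card B = v" "\<forall>b\<in>B. b \<subseteq> X \<and> card b = k"
    using D unfolding symmetric_design_def by auto
  then have "card B \<noteq> 0"
    using \<open>X \<noteq> {}\<close> by (metis card_0_eq)
  then obtain b where "b \<in> B"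
    by (metis card.empty ex_in_conv)
  then have "k \<le> v"
    using X card_mono[of X b] by simp
  then show "3 \<le> v"
    using kl lam by simp
  have "int (lam * (v - 1)) = int (k * (k - 1))"
    using symmetric_design_param_eq[OF D _ x] kl by simp
  then have "int lam * (int v - 1) = int k * (int k - 1)"
    using \<open>3 \<le> v\<close> kl by simp
  then have "int v \<le> 4 * (int k - int lam)^2"
    using lam kl \<open>k \<le> v\<close> by (intro param_identity_imp_le_four_order_sq) auto
  also have "int k - int lam = int (k - lam)"
    using kl by simp
  finally show "v \<le> 4 * (k - lam)^2"
    by (simp flip: of_nat_power of_nat_mult)
qed

section \<open>The incidence graph\<close>

lemma inc_adj_relpowp_parity:
  "(inc_adj X B ^^ n) u w \<Longrightarrow> even n \<longleftrightarrow> isl u = isl w"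
proof (induction n arbitrary: w)
  case (Suc n)
  then obtain m where "(inc_adj X B ^^ n) u m" "inc_adj X B m w"
    by (auto elim: relpowp_Suc_E)
  moreover from this(2) have "isl m \<noteq> isl w"
    by (cases m; cases w) auto
  ultimately show ?case
    using Suc.IH by auto
qed simp

lemma inc_graph_connected:
  assumes D: "symmetric_design X B v k lam" and "1 \<le> lam" "1 \<le> k"
    and "u \<in> inc_vertices X B" "w \<in> inc_vertices X B"
  shows "(inc_adj X B)\<^sup>*\<^sup>* u w"
proof -
  have blocks: "\<forall>b\<in>B. b \<subseteq> X \<and> card b = k"
    and common: "\<forall>x\<in>X. \<forall>y\<in>X. x \<noteq> y \<longrightarrow> card {b\<in>B. x \<in> b \<and> y \<in> b} = lam"
    using D unfolding symmetric_design_def by auto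
  have points: "(inc_adj X B)\<^sup>*\<^sup>* (Inl x) (Inl y)" if "x \<in> X" "y \<in> X" for x y
  proof (cases "x = y")
    case False
    then have "0 < card {b\<in>B. x \<in> b \<and> y \<in> b}"
      using common that \<open>1 \<le> lam\<close> by simp
    then obtain b where "b \<in> B" "x \<in> b" "y \<in> b"
      by (auto simp: card_gt_0_iff)
    then have "inc_adj X B (Inl x) (Inr b)" "inc_adj X B (Inr b) (Inl y)"
      using that by auto
    then show ?thesis
      by (metis converse_rtranclp_into_rtranclp r_into_rtranclp)
  qed simp
  have to_point: "\<exists>z\<in>X. (inc_adj X B)\<^sup>*\<^sup>* u (Inl z) \<and> (inc_adj X B)\<^sup>*\<^sup>* (Inl z) u"
    if "u \<in> inc_vertices X B" for u
  proof (cases u)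
    case (Inr b)
    with that have b: "b \<in> B" by (auto simp: inc_vertices_def)
    then have "b \<noteq> {}"
      using blocks \<open>1 \<le> k\<close> by auto
    then obtain z where "z \<in> b"
      by blast
    then have "z \<in> X" "inc_adj X B u (Inl z)" "inc_adj X B (Inl z) u"
      using b blocks Inr by auto
    then show ?thesis
      by (blast intro: r_into_rtranclp)
  qed (use that in \<open>auto simp: inc_vertices_def\<close>)
  obtain zu zw where "(inc_adj X B)\<^sup>*\<^sup>* u (Inl zu)" "(inc_adj X B)\<^sup>*\<^sup>* (Inl zu) (Inl zw)"
      "(inc_adj X B)\<^sup>*\<^sup>* (Inl zw) w"
    using to_point[OF assms(4)] to_point[OF assms(5)] points by blast
  then show ?thesis
    by (metis rtranclp_trans)
qed

lemma inc_graph_dist_eq_1_iff: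
  assumes "(inc_adj X B)\<^sup>*\<^sup>* u w"
  shows "graph_dist (inc_adj X B) u w = 1 \<longleftrightarrow> inc_adj X B u w"
  using graph_dist_eq_1_iff[OF assms] by (cases u; cases w) auto

lemma inc_graph_dist_parity:
  assumes "(inc_adj X B)\<^sup>*\<^sup>* u w"
  shows "even (graph_dist (inc_adj X B) u w) \<longleftrightarrow> isl u = isl w"
  using inc_adj_relpowp_parity[OF relpowp_graph_dist[OF assms]] .

lemma inc_graph_resolving_set:
  assumes connected: "\<And>u w. u \<in> inc_vertices X B \<Longrightarrow> w \<in> inc_vertices X B \<Longrightarrow> (inc_adj X B)\<^sup>*\<^sup>* u w"
    and P: "P \<subseteq> X" "P \<noteq> {}" and Q: "Q \<subseteq> B"
    and P_hits: "\<And>b c. b \<in> B \<Longrightarrow> c \<in> B \<Longrightarrow> b \<noteq> c \<Longrightarrow> sym_diff b c \<inter> P \<noteq> {}"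
    and Q_hits: "\<And>x y. x \<in> X \<Longrightarrow> y \<in> X \<Longrightarrow> x \<noteq> y \<Longrightarrow> {b\<in>B. (x \<in> b) \<noteq> (y \<in> b)} \<inter> Q \<noteq> {}"
  shows "resolving_set (inc_vertices X B) (inc_adj X B) (Inl ` P \<union> Inr ` Q)"
proof -
  let ?V = "inc_vertices X B" and ?S = "Inl ` P \<union> Inr ` Q" and ?d = "graph_dist (inc_adj X B)"
  have S_sub: "?S \<subseteq> ?V"
    using P Q by (auto simp: inc_vertices_def)
  have adjacent_iff: "?d z s = 1 \<longleftrightarrow> inc_adj X B z s" if "z \<in> ?V" "s \<in> ?S" for z s
    using inc_graph_dist_eq_1_iff connected that S_sub by blast
  have "\<exists>s\<in>?S. ?d u s \<noteq> ?d w s" if u: "u \<in> ?V - ?S" and w: "w \<in> ?V - ?S" and "u \<noteq> w" for u w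
  proof (cases "isl u = isl w")
    case False
    from P obtain p where "p \<in> P" "Inl p \<in> ?V"
      by (auto simp: inc_vertices_def)
    then have "even (?d u (Inl p)) \<longleftrightarrow> isl u" "even (?d w (Inl p)) \<longleftrightarrow> isl w"
      using inc_graph_dist_parity[OF connected] u w by auto
    with False \<open>p \<in> P\<close> show ?thesis
      by (intro bexI[of _ "Inl p"]) auto
  next
    case True
    then consider x y where "u = Inl x" "w = Inl y" | b c where "u = Inr b" "w = Inr c"
      by (cases u; cases w) auto
    then show ?thesis
    proof cases
      case 1
      with u w \<open>u \<noteq> w\<close> have "x \<in> X" "y \<in> X" "x \<noteq> y"
        by (auto simp: inc_vertices_def)
      then obtain c where "c \<in> B" "c \<in> Q" "(x \<in> c) \<noteq> (y \<in> c)"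
        using Q_hits by blast
      then show ?thesis
        using 1 u w adjacent_iff[of u "Inr c"] adjacent_iff[of w "Inr c"] \<open>x \<in> X\<close> \<open>y \<in> X\<close>
        by (intro bexI[of _ "Inr c"]) auto
    next
      case 2
      with u w \<open>u \<noteq> w\<close> have "b \<in> B" "c \<in> B" "b \<noteq> c"
        by (auto simp: inc_vertices_def)
      then obtain y where "y \<in> P" "(y \<in> b) \<noteq> (y \<in> c)"
        using P_hits by blast
      then show ?thesis
        using 2 u w adjacent_iff[of u "Inl y"] adjacent_iff[of w "Inl y"] \<open>b \<in> B\<close> \<open>c \<in> B\<close> P
        by (intro bexI[of _ "Inl y"]) auto
    qed
  qed
  then show ?thesis
    by (intro resolving_setI[OF S_sub connected])
qed

section \<open>The metric dimension bound\<close>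

lemma exists_points_hitting_block_sym_diffs:
  assumes D: "symmetric_design X B v k lam" and "lam < k"
  obtains P where "P \<subseteq> X" "\<And>b c. b \<in> B \<Longrightarrow> c \<in> B \<Longrightarrow> b \<noteq> c \<Longrightarrow> sym_diff b c \<inter> P \<noteq> {}"
    "real (card P) \<le> real v / real (k - lam) * ln (real v) + 1"
proof -
  have fin: "finite X" "card X = v" "finite B" "card B = v" "\<forall>b\<in>B. b \<subseteq> X"
    using D symmetric_design_finite_blocks[OF D] unfolding symmetric_design_def by auto
  have pos: "0 < 2 * (k - lam)"
    using \<open>lam < k\<close> by simp
  have large: "sym_diff b c \<subseteq> X \<and> 2 * (k - lam) \<le> card (sym_diff b c)"
    if "b \<in> B" "c \<in> B" "b \<noteq> c" for b c
    using card_block_sym_diff[OF D that] fin(5) that by auto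
  obtain P where P: "P \<subseteq> X" "\<forall>b\<in>B. \<forall>c\<in>B. b \<noteq> c \<longrightarrow> sym_diff b c \<inter> P \<noteq> {}"
      "real (card P) \<le> real v / real (2 * (k - lam)) * (2 * ln (real v)) + 1"
    using greedy_hitting_set_pairs[where A = sym_diff, OF fin(1-4) pos large] by blast
  show ?thesis
    by (rule that[of P]) (use P in auto)
qed

lemma exists_blocks_separating_points:
  assumes D: "symmetric_design X B v k lam" and "2 \<le> k" "lam < k"
  obtains Q where "Q \<subseteq> B"
    "\<And>x y. x \<in> X \<Longrightarrow> y \<in> X \<Longrightarrow> x \<noteq> y \<Longrightarrow> {b\<in>B. (x \<in> b) \<noteq> (y \<in> b)} \<inter> Q \<noteq> {}"
    "real (card Q) \<le> real v / real (k - lam) * ln (real v) + 1"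
proof -
  have fin: "finite X" "card X = v" "finite B" "card B = v"
    using D symmetric_design_finite_blocks[OF D] unfolding symmetric_design_def by auto
  have pos: "0 < 2 * (k - lam)"
    using \<open>lam < k\<close> by simp
  have large: "{b\<in>B. (x \<in> b) \<noteq> (y \<in> b)} \<subseteq> B \<and> 2 * (k - lam) \<le> card {b\<in>B. (x \<in> b) \<noteq> (y \<in> b)}"
    if "x \<in> X" "y \<in> X" "x \<noteq> y" for x y
    using card_separating_blocks[OF D \<open>2 \<le> k\<close> that] by auto
  obtain Q where Q: "Q \<subseteq> B"
      "\<forall>x\<in>X. \<forall>y\<in>X. x \<noteq> y \<longrightarrow> {b\<in>B. (x \<in> b) \<noteq> (y \<in> b)} \<inter> Q \<noteq> {}"
      "real (card Q) \<le> real v / real (2 * (k - lam)) * (2 * ln (real v)) + 1"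
    using greedy_hitting_set_pairs[where A = "\<lambda>x y. {b\<in>B. (x \<in> b) \<noteq> (y \<in> b)}",
        OF fin(3,4) fin(1,2) pos large]
    by blast
  show ?thesis
    by (rule that[of Q]) (use Q in auto)
qed

lemma metric_dimension_incidence_graph_le:
  assumes D: "symmetric_design X B v k lam" and kl: "lam + 2 \<le> k" and "X \<noteq> {}"
  shows "real (metric_dimension (inc_vertices X B) (inc_adj X B))
    \<le> 2 * (real v / real (k - lam) * ln (real v)) + 2"
proof -
  let ?md = "metric_dimension (inc_vertices X B) (inc_adj X B)"
    and ?r = "real v / real (k - lam) * ln (real v)"
  obtain P where P: "P \<subseteq> X" "\<And>b c. b \<in> B \<Longrightarrow> c \<in> B \<Longrightarrow> b \<noteq> c \<Longrightarrow> sym_diff b c \<inter> P \<noteq> {}"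
      "real (card P) \<le> ?r + 1"
    using exists_points_hitting_block_sym_diffs[OF D] kl by auto
  obtain Q where Q: "Q \<subseteq> B"
      "\<And>x y. x \<in> X \<Longrightarrow> y \<in> X \<Longrightarrow> x \<noteq> y \<Longrightarrow> {b\<in>B. (x \<in> b) \<noteq> (y \<in> b)} \<inter> Q \<noteq> {}"
      "real (card Q) \<le> ?r + 1"
    using exists_blocks_separating_points[OF D] kl by auto
  have fin: "finite X" "finite B" "card B = v"
    using D symmetric_design_finite_blocks[OF D] unfolding symmetric_design_def by auto
  then have "\<not> (\<forall>b\<in>B. \<forall>c\<in>B. b = c)"
    using card_le_Suc0_iff_eq[OF fin(2)] symmetric_design_card_le_order_sq(1)[OF D kl \<open>X \<noteq> {}\<close>]
    by simp
  then have "P \<noteq> {}"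
    using P(2) by blast
  moreover have "1 \<le> lam"
    using symmetric_design_lambda_pos[OF D _ \<open>X \<noteq> {}\<close>] kl by simp
  ultimately have "resolving_set (inc_vertices X B) (inc_adj X B) (Inl ` P \<union> Inr ` Q)"
    using inc_graph_connected[OF D] kl P Q by (intro inc_graph_resolving_set) auto
  moreover have "finite P" "finite Q"
    using P(1) Q(1) fin by (auto intro: finite_subset)
  ultimately have "?md \<le> card (Inl ` P \<union> Inr ` Q)"
    by (intro metric_dimension_le) auto
  also have "\<dots> = card P + card Q"
    using \<open>finite P\<close> \<open>finite Q\<close> by (subst card_Un_disjoint) (auto simp: card_image)
  finally have "real ?md \<le> real (card P) + real (card Q)"
    by simp
  also have "\<dots> \<le> (?r + 1) + (?r + 1)"
    using P(3) Q(3) by (rule add_mono)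
  finally show ?thesis
    by simp
qed

lemma greedy_bound_le_sqrt_ln:
  fixes v q :: real
  assumes v: "3 \<le> v" and q: "0 < q" and vq: "v \<le> 4 * q^2"
  shows "2 * (v / q * ln v) + 2 \<le> 5 * sqrt (2 * v) * ln (2 * v)"
proof -
  have "sqrt v \<le> sqrt ((2 * q)^2)"
    using vq by (simp add: power_mult_distrib)
  also have "\<dots> = 2 * q"
    using q real_sqrt_abs[of "2 * q"] by simp
  finally have "sqrt v / q \<le> 2"
    using q by (simp add: divide_le_eq)
  then have "sqrt v * (sqrt v / q) \<le> sqrt v * 2"
    using v by (intro mult_left_mono) auto
  moreover have "sqrt v * (sqrt v / q) = v / q"
    using v by (simp add: field_simps)
  ultimately have "v / q \<le> 2 * sqrt v"
    using v by simp
  then have "v / q * ln v \<le> 2 * sqrt v * ln v"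
    using v by (intro mult_right_mono) auto
  also have "\<dots> \<le> 2 * sqrt (2 * v) * ln (2 * v)"
    using v by (intro mult_mono) auto
  finally have main: "v / q * ln v \<le> 2 * (sqrt (2 * v) * ln (2 * v))"
    by (simp add: mult.assoc)
  have "2 \<le> sqrt (2 * v)"
    using v real_sqrt_le_mono[of 4 "2 * v"] by simp
  moreover have "1 \<le> ln (2 * v)"
    using v exp_le by (subst ln_ge_iff) auto
  ultimately have "2 * 1 \<le> sqrt (2 * v) * ln (2 * v)"
    using v by (intro mult_mono) auto
  moreover have "5 * sqrt (2 * v) * ln (2 * v) = 5 * (sqrt (2 * v) * ln (2 * v))"
    by simp
  ultimately show ?thesis
    using main by linarith
qed

theorem corollary2p7:
  "\<exists>C::real. \<forall>(X::nat set) (B::nat set set) v k lam.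
     symmetric_design X B v k lam \<and> k \<ge> lam + 2 \<longrightarrow>
     real (metric_dimension (inc_vertices X B) (inc_adj X B))
       \<le> C * sqrt (real (2 * v)) * ln (real (2 * v))"
proof (intro exI[of _ 5] allI impI, elim conjE)
  fix X :: "nat set" and B :: "nat set set" and v k lam :: nat
  assume D: "symmetric_design X B v k lam" and kl: "lam + 2 \<le> k"
  show "real (metric_dimension (inc_vertices X B) (inc_adj X B))
      \<le> 5 * sqrt (real (2 * v)) * ln (real (2 * v))"
  proof (cases "X = {}")
    case True
    then have "v = 0" "B = {}"
      using D symmetric_design_finite_blocks[OF D] unfolding symmetric_design_def by auto
    with True show ?thesis
      by (simp add: inc_vertices_def metric_dimension_empty)
  next
    case False
    define q where "q = k - lam"
    have "3 \<le> v" "v \<le> 4 * q^2"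
      using symmetric_design_card_le_order_sq[OF D kl False] unfolding q_def by auto
    then have "3 \<le> real v" "real v \<le> 4 * (real q)^2"
      by (simp_all flip: of_nat_power of_nat_mult)
    moreover have "0 < real q"
      using kl unfolding q_def by simp
    ultimately show ?thesis
      using metric_dimension_incidence_graph_le[OF D kl False] greedy_bound_le_sqrt_ln
      unfolding q_def[symmetric] by fastforce
  qed
qed

end
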